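(* Let $n\ge3$ and $A\subseteq[n]$. If $n-1\in A$, then $f_n(A\setminus\{n-1\})\ge f_n(A)$. If $2\notin A$, then $f_n(A\cup\{2\})\ge f_n(A)$.
   Context: For $m\ge1$ and a set $B$ of positive integers, $f_m(B)$ denotes the number of linear orders $q$ on $[m]$ such that for every triple $i<j<k$ in $[m]$: if $j\in B$ then $i$ is not ranked last among $\{i,j,k\}$ in $q$, and if $j\notin B$ then $k$ is not ranked first among $\{i,j,k\}$ in $q$. *)

theory Defs
  imports Main
begin

text \<open>A linear order q on [m] = {1..m} is a relation with linear_order_on {1..m} q
  (library notion, reflexive); (x,y) \<in> q means x is ranked no later than y.
  "x ranked last among {i,j,k}" means the other two are below x in q;
  "x ranked first" means x is below the other two.\<close>

definition ranked_last :: "nat rel \<Rightarrow> nat \<Rightarrow> nat \<Rightarrow> nat \<Rightarrow> nat \<Rightarrow> bool" where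
  "ranked_last q x i j k \<longleftrightarrow> (\<forall>y\<in>{i,j,k}. (y, x) \<in> q)"

definition ranked_first :: "nat rel \<Rightarrow> nat \<Rightarrow> nat \<Rightarrow> nat \<Rightarrow> nat \<Rightarrow> bool" where
  "ranked_first q x i j k \<longleftrightarrow> (\<forall>y\<in>{i,j,k}. (x, y) \<in> q)"

definition f :: "nat \<Rightarrow> nat set \<Rightarrow> nat" where
  "f m B = card {q. linear_order_on {1..m} q \<and>
     (\<forall>i j k. 1 \<le> i \<and> i < j \<and> j < k \<and> k \<le> m \<longrightarrow>
        (j \<in> B \<longrightarrow> \<not> ranked_last q i i j k) \<and>
        (j \<notin> B \<longrightarrow> \<not> ranked_first q k i j k))}"

end

theory Submission
  imports Defs
begin

text \<open>Removing n - 1 from A trades, for each i < n - 1, the constraint "i is not ranked last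
  among {i, n - 1, n}" for "n is not ranked first among {i, n - 1, n}"; all other constraints
  stay the same. An order admissible for A but not for A - {n - 1} ranks n before n - 1 and
  before some i < n - 1, and the old constraint then forces n - 1 to be ranked last. Moving
  n - 1 to the position immediately before n sends these orders injectively to orders that are
  admissible for A - {n - 1} but not for A; the original order is recovered by moving n - 1
  back to the end. The second claim reduces to the first through the symmetry x \<mapsto> n + 1 - x
  combined with reversal of the order: it exchanges the two kinds of constraints and sends
  the middle element 2 to n - 1.\<close>

lemma card_le_card_if_inj_on_Diff:
  assumes "finite A" and "finite B" and "inj_on g (A - B)" and "g ` (A - B) \<subseteq> B - A"
  shows "card A \<le> card B"
proof -
  have "card (A - B) \<le> card (B - A)"
    using assms by (intro card_inj_on_le) auto
  then have "card (A \<inter> B) + card (A - B) \<le> card (B \<inter> A) + card (B - A)"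
    by (simp add: Int_commute)
  then show ?thesis
    using assms(1,2) by (simp add: card_Int_Diff[symmetric])
qed

lemma linear_order_on_iff:
  "linear_order_on S q \<longleftrightarrow> q \<subseteq> S \<times> S \<and> (\<forall>x\<in>S. (x, x) \<in> q) \<and>
     (\<forall>x y z. (x, y) \<in> q \<longrightarrow> (y, z) \<in> q \<longrightarrow> (x, z) \<in> q) \<and>
     (\<forall>x y. (x, y) \<in> q \<longrightarrow> (y, x) \<in> q \<longrightarrow> x = y) \<and>
     (\<forall>x\<in>S. \<forall>y\<in>S. x \<noteq> y \<longrightarrow> (x, y) \<in> q \<or> (y, x) \<in> q)"
  unfolding order_on_defs refl_on_def trans_def antisym_def total_on_def by blast

lemma linear_order_on_inv_image:
  assumes "linear_order_on T r" and "inj_on h S" and "h ` S \<subseteq> T"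
  shows "linear_order_on S (Restr (inv_image r h) S)"
proof -
  have mem: "(x, y) \<in> Restr (inv_image r h) S \<longleftrightarrow> x \<in> S \<and> y \<in> S \<and> (h x, h y) \<in> r" for x y
    by auto
  have "\<forall>x\<in>T. (x, x) \<in> r"
    and "\<forall>x y z. (x, y) \<in> r \<longrightarrow> (y, z) \<in> r \<longrightarrow> (x, z) \<in> r"
    and "\<forall>x y. (x, y) \<in> r \<longrightarrow> (y, x) \<in> r \<longrightarrow> x = y"
    and "\<forall>x\<in>T. \<forall>y\<in>T. x \<noteq> y \<longrightarrow> (x, y) \<in> r \<or> (y, x) \<in> r"
    using assms(1) unfolding linear_order_on_iff by blast+
  with assms(2,3) show ?thesis
    unfolding linear_order_on_iff mem by (auto simp: inj_on_def image_subset_iff) blast+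
qed

text \<open>The element a is taken out of q and reinserted immediately before b.\<close>

definition move_before :: "'a set \<Rightarrow> 'a \<Rightarrow> 'a \<Rightarrow> 'a rel \<Rightarrow> 'a rel" where
  "move_before S a b q = {(x, y). x \<in> S \<and> y \<in> S \<and>
     (if x = a then b else x, if y = a then b else y) \<in> q \<and> (x, y) \<noteq> (b, a)}"

lemma linear_order_on_move_before:
  assumes q: "linear_order_on S q" and "a \<in> S" "b \<in> S" "a \<noteq> b"
  shows "linear_order_on S (move_before S a b q)"
proof -
  define p where "p z = (if z = a then b else z)" for z
  have mem: "(x, y) \<in> move_before S a b q \<longleftrightarrow>
      x \<in> S \<and> y \<in> S \<and> (p x, p y) \<in> q \<and> (x, y) \<noteq> (b, a)" for x y
    by (simp add: move_before_def p_def)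
  have p_S: "p x \<in> S" if "x \<in> S" for x
    using that \<open>b \<in> S\<close> by (simp add: p_def)
  have p_eq: "x = y \<or> {x, y} = {a, b}" if "p x = p y" for x y
    using that by (auto simp: p_def split: if_splits)
  have "p b = b" "p a = b"
    using \<open>a \<noteq> b\<close> by (auto simp: p_def)
  have Qs: "q \<subseteq> S \<times> S" and Qr: "\<And>x. x \<in> S \<Longrightarrow> (x, x) \<in> q"
    and Qt: "\<And>x y z. (x, y) \<in> q \<Longrightarrow> (y, z) \<in> q \<Longrightarrow> (x, z) \<in> q"
    and Qa: "\<And>x y. (x, y) \<in> q \<Longrightarrow> (y, x) \<in> q \<Longrightarrow> x = y"
    and Qto: "\<And>x y. x \<in> S \<Longrightarrow> y \<in> S \<Longrightarrow> x \<noteq> y \<Longrightarrow> (x, y) \<in> q \<or> (y, x) \<in> q"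
    using q unfolding linear_order_on_iff by blast+
  show ?thesis unfolding linear_order_on_iff
  proof (intro conjI allI ballI impI)
    show "move_before S a b q \<subseteq> S \<times> S"
      by (auto simp: move_before_def)
  next
    fix x assume "x \<in> S"
    then show "(x, x) \<in> move_before S a b q"
      using Qr p_S \<open>a \<noteq> b\<close> unfolding mem by auto
  next
    fix x y z assume xy: "(x, y) \<in> move_before S a b q" and yz: "(y, z) \<in> move_before S a b q"
    have "(x, z) \<noteq> (b, a)"
    proof
      assume "(x, z) = (b, a)"
      then have "x = b" "z = a" by simp_all
      then have "p y = b"
        using xy yz Qa \<open>p a = b\<close> \<open>p b = b\<close> unfolding mem by auto
      then show False
        using xy yz \<open>x = b\<close> \<open>z = a\<close> p_eq[of y b] \<open>p b = b\<close> unfolding mem by auto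
    qed
    then show "(x, z) \<in> move_before S a b q"
      using xy yz Qt unfolding mem by blast
  next
    fix x y assume "(x, y) \<in> move_before S a b q" "(y, x) \<in> move_before S a b q"
    then show "x = y"
      using Qa p_eq unfolding mem by (metis doubleton_eq_iff)
  next
    fix x y assume x: "x \<in> S" and y: "y \<in> S" and "x \<noteq> y"
    show "(x, y) \<in> move_before S a b q \<or> (y, x) \<in> move_before S a b q"
    proof (cases "p x = p y")
      case True
      then have "{x, y} = {a, b}"
        using p_eq \<open>x \<noteq> y\<close> by blast
      then show ?thesis
        using Qr \<open>a \<in> S\<close> \<open>b \<in> S\<close> \<open>p a = b\<close> \<open>p b = b\<close> \<open>a \<noteq> b\<close> unfolding mem doubleton_eq_iff by auto
    next
      case False
      then show ?thesis
        using x y Qto p_S \<open>p a = b\<close> \<open>p b = b\<close> unfolding mem by auto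
    qed
  qed
qed

lemma Restr_move_before: "Restr (move_before S a b q) (S - {a}) = Restr q (S - {a})"
  by (auto simp: move_before_def)

lemma linear_order_on_eq_Restr_if_last:
  assumes q: "linear_order_on S q" and last: "\<forall>x\<in>S. (x, a) \<in> q"
  shows "q = Restr q (S - {a}) \<union> S \<times> {a}"
proof -
  have "q \<subseteq> S \<times> S" and "\<And>x y. (x, y) \<in> q \<Longrightarrow> (y, x) \<in> q \<Longrightarrow> x = y"
    using q unfolding linear_order_on_iff by blast+
  then show ?thesis
    using last by fastforce
qed

lemma inj_on_move_before:
  "inj_on (move_before S a b) {q. linear_order_on S q \<and> (\<forall>x\<in>S. (x, a) \<in> q)}"
proof (rule inj_onI, clarify)
  fix q q' assume "linear_order_on S q" "\<forall>x\<in>S. (x, a) \<in> q"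
    and "linear_order_on S q'" "\<forall>x\<in>S. (x, a) \<in> q'"
    and "move_before S a b q = move_before S a b q'"
  then show "q = q'"
    using linear_order_on_eq_Restr_if_last Restr_move_before by metis
qed

definition admissible :: "nat \<Rightarrow> nat set \<Rightarrow> nat rel \<Rightarrow> bool" where
  "admissible m B q \<longleftrightarrow> (\<forall>i j k. 1 \<le> i \<and> i < j \<and> j < k \<and> k \<le> m \<longrightarrow>
     (j \<in> B \<longrightarrow> \<not> ranked_last q i i j k) \<and> (j \<notin> B \<longrightarrow> \<not> ranked_first q k i j k))"

definition admissible_orders :: "nat \<Rightarrow> nat set \<Rightarrow> nat rel set" where
  "admissible_orders m B = {q. linear_order_on {1..m} q \<and> admissible m B q}"

lemma f_eq_card_admissible_orders: "f m B = card (admissible_orders m B)"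
  unfolding f_def admissible_orders_def admissible_def ..

lemma finite_admissible_orders: "finite (admissible_orders m B)"
proof (rule finite_subset)
  show "admissible_orders m B \<subseteq> Pow ({1..m} \<times> {1..m})"
    by (auto simp: admissible_orders_def linear_order_on_iff)
qed simp

lemma admissible_iff:
  assumes "linear_order_on {1..m} q"
  shows "admissible m B q \<longleftrightarrow> (\<forall>i j k. 1 \<le> i \<and> i < j \<and> j < k \<and> k \<le> m \<longrightarrow>
     (j \<in> B \<longrightarrow> \<not> ((j, i) \<in> q \<and> (k, i) \<in> q)) \<and> (j \<notin> B \<longrightarrow> \<not> ((k, i) \<in> q \<and> (k, j) \<in> q)))"
proof -
  have "ranked_last q i i j k \<longleftrightarrow> (j, i) \<in> q \<and> (k, i) \<in> q"
    and "ranked_first q k i j k \<longleftrightarrow> (k, i) \<in> q \<and> (k, j) \<in> q"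
    if "1 \<le> i \<and> i < j \<and> j < k \<and> k \<le> m" for i j k
  proof -
    have "(i, i) \<in> q" "(k, k) \<in> q"
      using assms that unfolding linear_order_on_iff by auto
    then show "ranked_last q i i j k \<longleftrightarrow> (j, i) \<in> q \<and> (k, i) \<in> q"
      and "ranked_first q k i j k \<longleftrightarrow> (k, i) \<in> q \<and> (k, j) \<in> q"
      unfolding ranked_last_def ranked_first_def by auto
  qed
  then show ?thesis
    unfolding admissible_def by blast
qed

definition mirror_order :: "nat \<Rightarrow> nat rel \<Rightarrow> nat rel" where
  "mirror_order n q = Restr (inv_image (q\<inverse>) (\<lambda>x. Suc n - x)) {1..n}"

definition mirror_set :: "nat \<Rightarrow> nat set \<Rightarrow> nat set" where
  "mirror_set n B = {j \<in> {1..n}. Suc n - j \<notin> B}"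

lemma mem_mirror_order:
  "(x, y) \<in> mirror_order n q \<longleftrightarrow> x \<in> {1..n} \<and> y \<in> {1..n} \<and> (Suc n - y, Suc n - x) \<in> q"
  by (auto simp: mirror_order_def inv_image_def)

lemma linear_order_on_mirror_order:
  assumes "linear_order_on {1..n} q"
  shows "linear_order_on {1..n} (mirror_order n q)"
  unfolding mirror_order_def
  using assms by (intro linear_order_on_inv_image) (auto simp: inj_on_def)

lemma mirror_order_mirror_order:
  assumes "q \<subseteq> {1..n} \<times> {1..n}"
  shows "mirror_order n (mirror_order n q) = q"
proof -
  have "(x, y) \<in> mirror_order n (mirror_order n q) \<longleftrightarrow> (x, y) \<in> q" for x y
  proof (cases "x \<in> {1..n} \<and> y \<in> {1..n}")
    case True
    then show ?thesis
      by (auto simp: mem_mirror_order Suc_diff_le)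
  next
    case False
    then show ?thesis
      using assms by (auto simp: mem_mirror_order)
  qed
  then show ?thesis
    by auto
qed

lemma mirror_set_mirror_set:
  assumes "B \<subseteq> {1..n}"
  shows "mirror_set n (mirror_set n B) = B"
  using assms by (auto simp: mirror_set_def Suc_diff_le)

lemma admissible_mirror_order:
  assumes q: "linear_order_on {1..n} q" and adm: "admissible n (mirror_set n B) q"
  shows "admissible n B (mirror_order n q)"
  unfolding admissible_iff[OF linear_order_on_mirror_order[OF q]]
proof (intro allI impI)
  fix i j k assume ijk: "1 \<le> i \<and> i < j \<and> j < k \<and> k \<le> n"
  let ?i = "Suc n - k" and ?j = "Suc n - j" and ?k = "Suc n - i"
  have "1 \<le> ?i \<and> ?i < ?j \<and> ?j < ?k \<and> ?k \<le> n"
    using ijk by auto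
  moreover have "?j \<in> mirror_set n B \<longleftrightarrow> j \<notin> B"
    using ijk by (auto simp: mirror_set_def Suc_diff_le)
  ultimately show "(j \<in> B \<longrightarrow> \<not> ((j, i) \<in> mirror_order n q \<and> (k, i) \<in> mirror_order n q)) \<and>
      (j \<notin> B \<longrightarrow> \<not> ((k, i) \<in> mirror_order n q \<and> (k, j) \<in> mirror_order n q))"
    using adm unfolding admissible_iff[OF q] mem_mirror_order by blast
qed

lemma f_mirror_set_le: "f n (mirror_set n B) \<le> f n B"
proof -
  have "mirror_order n (mirror_order n q) = q" if "q \<in> admissible_orders n (mirror_set n B)" for q
    using that by (intro mirror_order_mirror_order) (simp add: admissible_orders_def linear_order_on_iff)
  then have "inj_on (mirror_order n) (admissible_orders n (mirror_set n B))"
    by (rule inj_on_inverseI)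
  moreover have "mirror_order n ` admissible_orders n (mirror_set n B) \<subseteq> admissible_orders n B"
    using linear_order_on_mirror_order admissible_mirror_order
    unfolding admissible_orders_def by blast
  ultimately show ?thesis
    unfolding f_eq_card_admissible_orders by (intro card_inj_on_le finite_admissible_orders)
qed

lemma violation_of_admissible_Diff_penultimate:
  assumes q: "linear_order_on {1..n} q" and adm: "admissible n A q"
    and not_adm: "\<not> admissible n (A - {n - 1}) q"
  obtains i where "1 \<le> i" "i < n - 1" "(n, i) \<in> q" "(n, n - 1) \<in> q"
proof -
  obtain i j k where ijk: "1 \<le> i \<and> i < j \<and> j < k \<and> k \<le> n"
    and viol: "\<not> ((j \<in> A - {n - 1} \<longrightarrow> \<not> ((j, i) \<in> q \<and> (k, i) \<in> q)) \<and>
      (j \<notin> A - {n - 1} \<longrightarrow> \<not> ((k, i) \<in> q \<and> (k, j) \<in> q)))"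
    using not_adm unfolding admissible_iff[OF q] by blast
  have "j = n - 1"
    using adm viol ijk unfolding admissible_iff[OF q] by blast
  moreover from this have "k = n"
    using ijk by auto
  ultimately have "(n, i) \<in> q" "(n, n - 1) \<in> q"
    using viol by auto
  then show ?thesis
    using that ijk \<open>j = n - 1\<close> by blast
qed

lemma penultimate_last_if_admissible:
  assumes q: "linear_order_on {1..n} q" and adm: "admissible n A q"
    and "n - 1 \<in> A" and "(n, n - 1) \<in> q" and "x \<in> {1..n}"
  shows "(x, n - 1) \<in> q"
proof -
  consider "x = n - 1" | "x = n" | "x < n - 1"
    using \<open>x \<in> {1..n}\<close> by fastforce
  then show ?thesis
  proof cases
    case 1
    then show ?thesis
      using q \<open>x \<in> {1..n}\<close> unfolding linear_order_on_iff by blast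
  next
    case 2
    then show ?thesis
      using \<open>(n, n - 1) \<in> q\<close> by simp
  next
    case 3
    then have "\<not> ((n - 1, x) \<in> q \<and> (n, x) \<in> q)"
      using adm \<open>n - 1 \<in> A\<close> \<open>x \<in> {1..n}\<close> unfolding admissible_iff[OF q] by force
    moreover have "(x, n - 1) \<in> q \<or> (n - 1, x) \<in> q"
      using q 3 \<open>x \<in> {1..n}\<close> unfolding linear_order_on_iff by force
    ultimately show ?thesis
      using q \<open>(n, n - 1) \<in> q\<close> unfolding linear_order_on_iff by blast
  qed
qed

lemma admissible_move_before_penultimate:
  assumes q: "linear_order_on {1..n} q" and adm: "admissible n A q" and "2 \<le> n"
  shows "admissible n (A - {n - 1}) (move_before {1..n} (n - 1) n q)"
proof -
  let ?q' = "move_before {1..n} (n - 1) n q"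
  define p where "p z = (if z = n - 1 then n else z)" for z
  have q'_q: "(p x, p y) \<in> q" if "(x, y) \<in> ?q'" for x y
    using that by (simp add: move_before_def p_def)
  have lin: "linear_order_on {1..n} ?q'"
    using q \<open>2 \<le> n\<close> by (intro linear_order_on_move_before) auto
  show ?thesis
    unfolding admissible_iff[OF lin]
  proof (intro allI impI)
    fix i j k assume ijk: "1 \<le> i \<and> i < j \<and> j < k \<and> k \<le> n"
    show "(j \<in> A - {n - 1} \<longrightarrow> \<not> ((j, i) \<in> ?q' \<and> (k, i) \<in> ?q')) \<and>
        (j \<notin> A - {n - 1} \<longrightarrow> \<not> ((k, i) \<in> ?q' \<and> (k, j) \<in> ?q'))"
    proof (cases "j = n - 1")
      case True
      then have "(k, j) \<notin> ?q'"
        using ijk by (auto simp: move_before_def)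
      then show ?thesis
        using True by blast
    next
      case False
      then have "p i = i" "p j = j" "j < p k" "p k \<le> n"
        using ijk by (auto simp: p_def)
      then show ?thesis
        using False adm ijk q'_q[of j i] q'_q[of k i] q'_q[of k j] unfolding admissible_iff[OF q] by auto
    qed
  qed
qed

lemma not_admissible_move_before_penultimate:
  assumes q: "linear_order_on {1..n} q" and "n - 1 \<in> A"
    and "1 \<le> i" "i < n - 1" "(n, i) \<in> q"
  shows "\<not> admissible n A (move_before {1..n} (n - 1) n q)"
proof -
  let ?q' = "move_before {1..n} (n - 1) n q"
  have "i \<in> {1..n}" "n - 1 \<in> {1..n}" "n \<in> {1..n}" "i \<noteq> n - 1" "i \<noteq> n"
    using assms(3,4) by auto
  moreover have "(i, i) \<in> q"
    using q \<open>i \<in> {1..n}\<close> unfolding linear_order_on_iff by blast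
  ultimately have "ranked_last ?q' i i (n - 1) n"
    using \<open>(n, i) \<in> q\<close> unfolding ranked_last_def by (auto simp: move_before_def)
  moreover have "1 \<le> i \<and> i < n - 1 \<and> n - 1 < n \<and> n \<le> n"
    using assms(3,4) by auto
  ultimately show ?thesis
    using \<open>n - 1 \<in> A\<close> unfolding admissible_def by blast
qed

lemma f_le_f_Diff_penultimate:
  assumes "2 \<le> n" and "n - 1 \<in> A"
  shows "f n A \<le> f n (A - {n - 1})"
proof -
  let ?g = "move_before {1..n} (n - 1) n"
  let ?bad = "admissible_orders n A - admissible_orders n (A - {n - 1})"
  have "linear_order_on {1..n} q \<and> (\<forall>x\<in>{1..n}. (x, n - 1) \<in> q) \<and>
      ?g q \<in> admissible_orders n (A - {n - 1}) - admissible_orders n A" if "q \<in> ?bad" for q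
  proof -
    have q: "linear_order_on {1..n} q" and adm: "admissible n A q"
      and "\<not> admissible n (A - {n - 1}) q"
      using that by (auto simp: admissible_orders_def)
    then obtain i where "1 \<le> i" "i < n - 1" "(n, i) \<in> q" "(n, n - 1) \<in> q"
      by (rule violation_of_admissible_Diff_penultimate)
    then show ?thesis
      using q adm assms penultimate_last_if_admissible[OF q adm]
        admissible_move_before_penultimate[OF q adm]
        not_admissible_move_before_penultimate[OF q \<open>n - 1 \<in> A\<close>]
        linear_order_on_move_before[OF q]
      by (auto simp: admissible_orders_def)
  qed
  then have "inj_on ?g ?bad" and "?g ` ?bad \<subseteq> admissible_orders n (A - {n - 1}) - admissible_orders n A"
    by (auto intro: inj_on_subset[OF inj_on_move_before])
  then show ?thesis
    unfolding f_eq_card_admissible_orders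
    by (intro card_le_card_if_inj_on_Diff finite_admissible_orders)
qed

theorem corollary2:
  fixes n :: nat and A :: "nat set"
  assumes "n \<ge> 3" and "A \<subseteq> {1..n}"
  shows "(n - 1 \<in> A \<longrightarrow> f n (A - {n - 1}) \<ge> f n A)
       \<and> (2 \<notin> A \<longrightarrow> f n (A \<union> {2}) \<ge> f n A)"
proof (intro conjI impI)
  assume "n - 1 \<in> A"
  then show "f n (A - {n - 1}) \<ge> f n A"
    using assms(1) by (intro f_le_f_Diff_penultimate) auto
next
  assume "2 \<notin> A"
  have "f n A = f n (mirror_set n (mirror_set n A))"
    using assms(2) by (simp add: mirror_set_mirror_set)
  also have "\<dots> \<le> f n (mirror_set n A)"
    by (rule f_mirror_set_le)
  also have "\<dots> \<le> f n (mirror_set n A - {n - 1})"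
    using assms(1) \<open>2 \<notin> A\<close> by (intro f_le_f_Diff_penultimate) (auto simp: mirror_set_def)
  also have "mirror_set n A - {n - 1} = mirror_set n (A \<union> {2})"
    using assms(1) by (auto simp: mirror_set_def)
  also have "f n \<dots> \<le> f n (A \<union> {2})"
    by (rule f_mirror_set_le)
  finally show "f n (A \<union> {2}) \<ge> f n A" .
qed

end
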